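(* Consider the discrete all-pay auction in the model with ties with $n\in\{2,3\}$ bidders whose values are drawn independently and uniformly from $X=\{0,1,\dots,x\}$, $x\ge10$. Let $\beta$ be a symmetric equilibrium bidding function. Then $\beta(x-1)\le\beta(x-2)+1$ and $\beta(x)\le\beta(x-1)+1$.
   Context: Model. There are $n$ risk-neutral bidders competing for one indivisible object. Values and bids lie in $X=\{0,1,2,\dots,x\}$. Each bidder privately learns a value drawn independently and uniformly from $X$. Each bidder submits a bid in $X$. A (pure) strategy is a bidding function $\beta:X\to X$. In the model with ties, if $m$ bidders submit the highest bid, each of them wins with probability $1/m$. In the all-pay auction, a bidder with value $v_i$ bidding $b_i$ gets expected payoff $v_i\Pr(i\text{ wins})-b_i$ (everyone pays their bid). An equilibrium is a profile of bidding functions such that each bidder's bidding function maximises their expected payoff given the others' bidding functions (a pure-strategy Bayes–Nash equilibrium) and such that no bidder uses a weakly dominated bidding function (a bidding function is weakly dominated if some other bidding function yields at least as high expected payoff against every profile of opponents' bidding functions, and strictly higher against some). A symmetric equilibrium is an equilibrium in which all bidders use the same bidding function. *)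

theory Defs
  imports Complex_Main "HOL-Library.FuncSet"
begin

text \<open>Values and bids lie in X = {0..x}. A bidding function is a map nat => nat
  sending {0..x} into {0..x} (values outside X are irrelevant).\<close>
definition strat :: "nat \<Rightarrow> (nat \<Rightarrow> nat) \<Rightarrow> bool" where
  "strat x \<beta> \<longleftrightarrow> (\<forall>v\<le>x. \<beta> v \<le> x)"

definition win :: "nat \<Rightarrow> (nat \<Rightarrow> nat \<Rightarrow> nat) \<Rightarrow> (nat \<Rightarrow> nat) \<Rightarrow> nat \<Rightarrow> real" where
  "win m gs vs b =
     (if \<forall>j<m. gs j (vs j) \<le> b
      then 1 / real (1 + card {j. j < m \<and> gs j (vs j) = b}) else 0)"

definition interim :: "nat \<Rightarrow> nat \<Rightarrow> (nat \<Rightarrow> nat \<Rightarrow> nat) \<Rightarrow> nat \<Rightarrow> nat \<Rightarrow> real" where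
  "interim x m gs v b =
     real v * ((\<Sum>vs\<in>PiE {..<m} (\<lambda>_. {0..x}). win m gs vs b) / real (x + 1) ^ m)
     - real b"

definition payoff :: "nat \<Rightarrow> nat \<Rightarrow> (nat \<Rightarrow> nat \<Rightarrow> nat) \<Rightarrow> (nat \<Rightarrow> nat) \<Rightarrow> real" where
  "payoff x m gs \<beta> = (\<Sum>v=0..x. interim x m gs v (\<beta> v)) / real (x + 1)"

definition weakly_dominated :: "nat \<Rightarrow> nat \<Rightarrow> (nat \<Rightarrow> nat) \<Rightarrow> bool" where
  "weakly_dominated x m \<beta> \<longleftrightarrow>
     (\<exists>\<beta>'. strat x \<beta>' \<and>
        (\<forall>gs. (\<forall>j<m. strat x (gs j)) \<longrightarrow> payoff x m gs \<beta>' \<ge> payoff x m gs \<beta>) \<and>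
        (\<exists>gs. (\<forall>j<m. strat x (gs j)) \<and> payoff x m gs \<beta>' > payoff x m gs \<beta>))"

definition sym_equilibrium :: "nat \<Rightarrow> nat \<Rightarrow> (nat \<Rightarrow> nat) \<Rightarrow> bool" where
  "sym_equilibrium x n \<beta> \<longleftrightarrow>
     strat x \<beta> \<and>
     (\<forall>\<beta>'. strat x \<beta>' \<longrightarrow> payoff x (n - 1) (\<lambda>_. \<beta>) \<beta>' \<le> payoff x (n - 1) (\<lambda>_. \<beta>) \<beta>) \<and>
     \<not> weakly_dominated x (n - 1) \<beta>"

end

theory Submission
  imports Defs
begin

text \<open>Comparing best responses
  shows that bids are monotone in the value and never exceed it. Let \<open>m \<le> 2\<close> be the number
  of opponents. If some bid \<open>b = \<beta> v\<close> lies at least two above all lower bids, then \<open>b - 1\<close> is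
  unused, and deviating to it saves one unit while losing only ties at \<open>b\<close>, a winning
  probability of at most \<open>m k / (2 (x + 1))\<close> when \<open>k\<close> values bid \<open>b\<close>; best response then forces
  \<open>2 (x + 1) \<le> v m k\<close>, impossible for \<open>v \<in> {x - 1, x}\<close> and \<open>m k \<le> 2\<close>. The one remaining case,
  \<open>\<beta> (x - 1) = \<beta> x\<close> with two opponents, is the highest bid shared by two values; raising it by
  one wins for sure, and the tie deficit \<open>4 / (3 (x + 1))\<close> at value \<open>x\<close> outweighs its cost.\<close>

lemma win_nonneg: "0 \<le> win m gs vs b"
  by (simp add: win_def)

lemma win_le_1: "win m gs vs b \<le> 1"
  by (simp add: win_def)

lemma win_eq_1_if_all_below:
  assumes "\<forall>j<m. gs j (vs j) < b"
  shows "win m gs vs b = 1"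
proof -
  have "{j. j < m \<and> gs j (vs j) = b} = {}" using assms by fastforce
  thus ?thesis using assms by (simp add: win_def less_imp_le)
qed

lemma win_mono:
  assumes "b \<le> b'"
  shows "win m gs vs b \<le> win m gs vs b'"
proof (cases "\<forall>j<m. gs j (vs j) \<le> b")
  case True
  show ?thesis
  proof (cases "b = b'")
    case False
    with True assms have "\<forall>j<m. gs j (vs j) < b'" by fastforce
    thus ?thesis by (simp add: win_eq_1_if_all_below win_le_1)
  qed simp
next
  case False
  hence "win m gs vs b = 0" by (simp add: win_def)
  thus ?thesis using win_nonneg[of m gs vs b'] by simp
qed

lemma win_step_le:
  assumes "0 < b" and "\<forall>j<m. gs j (vs j) \<noteq> b - 1"
  shows "win m gs vs b - win m gs vs (b - 1) \<le> real (card {j. j < m \<and> gs j (vs j) = b}) / 2"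
proof (cases "\<forall>j<m. gs j (vs j) \<le> b")
  case below: True
  show ?thesis
  proof (cases "{j. j < m \<and> gs j (vs j) = b} = {}")
    case True
    with below assms have "\<forall>j<m. gs j (vs j) < b - 1" by fastforce
    thus ?thesis using win_le_1[of m gs vs b] by (simp add: win_eq_1_if_all_below)
  next
    case False
    hence "real (card {j. j < m \<and> gs j (vs j) = b}) \<ge> 1" by (simp add: Suc_le_eq card_gt_0_iff)
    moreover from this below have "win m gs vs b \<le> 1/2" by (simp add: win_def)
    ultimately show ?thesis using win_nonneg[of m gs vs "b - 1"] by linarith
  qed
next
  case False
  hence "win m gs vs b = 0" by (simp add: win_def)
  thus ?thesis using win_nonneg[of m gs vs "b - 1"] by simp
qed

lemma win_deficit_ge:
  assumes "\<forall>j<m. gs j (vs j) \<le> b"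
  shows "real (card {j. j < m \<and> gs j (vs j) = b}) / real (m + 1) \<le> 1 - win m gs vs b"
proof -
  define k where "k = card {j. j < m \<and> gs j (vs j) = b}"
  have "k \<le> card {..<m}" unfolding k_def by (rule card_mono) auto
  hence "real k / real (m + 1) \<le> real k / real (k + 1)"
    by (intro divide_left_mono) auto
  also have "\<dots> = 1 - win m gs vs b"
    using assms by (simp add: win_def k_def field_simps)
  finally show ?thesis unfolding k_def .
qed

lemma sum_PiE_card_count:
  assumes "finite A"
  shows "(\<Sum>vs\<in>PiE {..<m} (\<lambda>_. A). real (card {j. j < m \<and> P (vs j)}))
           = real m * real (card {a\<in>A. P a}) * real (card A) ^ (m - 1)"
proof -
  let ?S = "PiE {..<m} (\<lambda>_. A)"
  have slice: "(\<Sum>vs\<in>?S. of_bool (P (vs j)) :: real) = real (card {a\<in>A. P a}) * real (card A) ^ (m - 1)"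
    if "j < m" for j
  proof -
    have "?S \<inter> {vs. P (vs j)} = PiE {..<m} (\<lambda>i. if i = j then {a\<in>A. P a} else A)"
      using that by (auto simp: PiE_def Pi_def)
    hence "card (?S \<inter> {vs. P (vs j)}) = (\<Prod>i<m. card (if i = j then {a\<in>A. P a} else A))"
      by (simp add: card_PiE assms)
    also have "\<dots> = card {a\<in>A. P a} * (\<Prod>i\<in>{..<m}-{j}. card A)"
      using that by (subst prod.remove[of _ j]) (auto intro!: prod.cong)
    also have "\<dots> = card {a\<in>A. P a} * card A ^ (m - 1)" using that by simp
    finally show ?thesis using assms by (simp add: finite_PiE)
  qed
  have "(\<Sum>vs\<in>?S. real (card {j. j < m \<and> P (vs j)})) = (\<Sum>vs\<in>?S. \<Sum>j<m. of_bool (P (vs j)))"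
    by (intro sum.cong refl) (simp add: Int_def[symmetric] Collect_conj_eq lessThan_def)
  also have "\<dots> = (\<Sum>j<m. \<Sum>vs\<in>?S. of_bool (P (vs j)))" by (rule sum.swap)
  also have "\<dots> = real m * real (card {a\<in>A. P a}) * real (card A) ^ (m - 1)"
    by (simp add: slice)
  finally show ?thesis .
qed

locale symmetric_best_response =
  fixes x m :: nat and \<beta> :: "nat \<Rightarrow> nat"
  assumes opponents: "0 < m"
    and strategy: "strat x \<beta>"
    and best_response:
      "\<And>v b. v \<le> x \<Longrightarrow> b \<le> x \<Longrightarrow> interim x m (\<lambda>_. \<beta>) v b \<le> interim x m (\<lambda>_. \<beta>) v (\<beta> v)"
begin

abbreviation profiles :: "(nat \<Rightarrow> nat) set" where
  "profiles \<equiv> PiE {..<m} (\<lambda>_. {0..x})"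

definition wins :: "nat \<Rightarrow> real" where
  "wins b = (\<Sum>vs\<in>profiles. win m (\<lambda>_. \<beta>) vs b)"

lemma bid_le_x: "v \<le> x \<Longrightarrow> \<beta> v \<le> x"
  using strategy by (simp add: strat_def)

lemma profile_le_x: "vs \<in> profiles \<Longrightarrow> j < m \<Longrightarrow> vs j \<le> x"
  by (auto simp: PiE_def Pi_def)

lemma card_profiles: "real (card profiles) = real (x + 1) ^ m"
  by (simp add: card_PiE)

lemma power_eq_mult_power_pred: "real (x + 1) ^ m = real (x + 1) * real (x + 1) ^ (m - 1)"
  using opponents by (simp add: power_eq_if)

lemma wins_nonneg: "0 \<le> wins b"
  unfolding wins_def by (intro sum_nonneg win_nonneg)

lemma wins_le: "wins b \<le> real (x + 1) ^ m"
proof -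
  have "wins b \<le> (\<Sum>vs\<in>profiles. 1)" unfolding wins_def by (intro sum_mono win_le_1)
  thus ?thesis using card_profiles by simp
qed

lemma wins_mono: "b \<le> b' \<Longrightarrow> wins b \<le> wins b'"
  unfolding wins_def by (intro sum_mono win_mono)

lemma wins_scaled_best_response:
  assumes "v \<le> x" and "b \<le> x"
  shows "real v * wins b - real b * real (x + 1) ^ m
           \<le> real v * wins (\<beta> v) - real (\<beta> v) * real (x + 1) ^ m"
proof -
  have pos: "0 < real (x + 1) ^ m" by simp
  have "interim x m (\<lambda>_. \<beta>) v b \<le> interim x m (\<lambda>_. \<beta>) v (\<beta> v)"
    using best_response[OF assms] .
  hence "real v * (wins b / real (x + 1) ^ m) - b \<le> real v * (wins (\<beta> v) / real (x + 1) ^ m) - \<beta> v"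
    by (simp add: interim_def wins_def)
  from mult_left_mono[OF this less_imp_le[OF pos]] pos show ?thesis
    by (simp add: algebra_simps)
qed

lemma bid_le_value:
  assumes "v \<le> x"
  shows "\<beta> v \<le> v"
proof -
  have "real v * wins 0 \<le> real v * wins (\<beta> v) - real (\<beta> v) * real (x + 1) ^ m"
    using wins_scaled_best_response[OF assms, of 0] by simp
  moreover have "real v * wins (\<beta> v) \<le> real v * real (x + 1) ^ m"
    by (intro mult_left_mono wins_le) simp
  moreover have "0 \<le> real v * wins 0" by (simp add: wins_nonneg)
  ultimately have "real (\<beta> v) * real (x + 1) ^ m \<le> real v * real (x + 1) ^ m" by linarith
  thus ?thesis by simp
qed

text \<open>Adding the best-response inequalities of \<open>v\<close> and \<open>v'\<close> against each other's bid shows that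
  \<open>\<beta> v' < \<beta> v\<close> forces equal winning probabilities, and then bidding \<open>\<beta> v\<close> is strictly worse.\<close>
lemma bid_mono:
  assumes "v \<le> v'" and "v' \<le> x"
  shows "\<beta> v \<le> \<beta> v'"
proof (rule ccontr)
  let ?N = "real (x + 1) ^ m"
  assume "\<not> ?thesis"
  hence lt: "\<beta> v' < \<beta> v" by simp
  with assms have "v < v'" by (cases "v = v'") auto
  have v: "real v * wins (\<beta> v') - real (\<beta> v') * ?N \<le> real v * wins (\<beta> v) - real (\<beta> v) * ?N"
    using assms by (intro wins_scaled_best_response bid_le_x) auto
  have v': "real v' * wins (\<beta> v) - real (\<beta> v) * ?N \<le> real v' * wins (\<beta> v') - real (\<beta> v') * ?N"
    using assms by (intro wins_scaled_best_response bid_le_x) auto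
  have "(real v' - real v) * (wins (\<beta> v) - wins (\<beta> v')) \<le> 0"
    using v v' by (simp add: algebra_simps)
  with \<open>v < v'\<close> have "wins (\<beta> v) \<le> wins (\<beta> v')" by (simp add: mult_le_0_iff)
  with wins_mono[of "\<beta> v'" "\<beta> v"] lt have "wins (\<beta> v) = wins (\<beta> v')" by simp
  with v have "real (\<beta> v) * ?N \<le> real (\<beta> v') * ?N" by simp
  with lt show False by simp
qed

lemma sum_card_opponents_at:
  "(\<Sum>vs\<in>profiles. real (card {j. j < m \<and> \<beta> (vs j) = b}))
     = real m * real (card {w\<in>{0..x}. \<beta> w = b}) * real (x + 1) ^ (m - 1)"
  using sum_PiE_card_count[of "{0..x}" m "\<lambda>w. \<beta> w = b"] by simp

lemma isolated_bid_bound: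
  assumes "v \<le> x" and "\<beta> v = b" and "0 < b" and no_lower: "\<forall>w\<le>x. \<beta> w \<noteq> b - 1"
  shows "2 * (x + 1) \<le> v * m * card {w\<in>{0..x}. \<beta> w = b}"
proof -
  let ?R = "real (x + 1) ^ (m - 1)" and ?k = "real (card {w\<in>{0..x}. \<beta> w = b})"
  have "wins b - wins (b - 1) = (\<Sum>vs\<in>profiles. win m (\<lambda>_. \<beta>) vs b - win m (\<lambda>_. \<beta>) vs (b - 1))"
    unfolding wins_def by (simp add: sum_subtractf)
  also have "\<dots> \<le> (\<Sum>vs\<in>profiles. real (card {j. j < m \<and> \<beta> (vs j) = b}) / 2)"
    using no_lower \<open>0 < b\<close> by (intro sum_mono win_step_le) (auto dest: profile_le_x)
  also have "\<dots> = real m * ?k * ?R / 2"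
    by (simp add: sum_divide_distrib[symmetric] sum_card_opponents_at)
  finally have step: "wins b - wins (b - 1) \<le> real m * ?k * ?R / 2" .
  have "b \<le> x" using assms bid_le_x by auto
  hence "real v * wins (b - 1) - real (b - 1) * real (x + 1) ^ m \<le> real v * wins b - real b * real (x + 1) ^ m"
    using wins_scaled_best_response[OF \<open>v \<le> x\<close>, of "b - 1"] \<open>\<beta> v = b\<close> by simp
  with \<open>0 < b\<close> have "real (x + 1) ^ m \<le> real v * (wins b - wins (b - 1))"
    by (simp add: of_nat_diff algebra_simps)
  also have "\<dots> \<le> real v * (real m * ?k * ?R / 2)" by (intro mult_left_mono step) simp
  finally have "real (x + 1) * ?R \<le> real v * (real m * ?k * ?R / 2)"
    by (subst (asm) power_eq_mult_power_pred)
  hence "real (2 * (x + 1)) * ?R \<le> real (v * m * card {w\<in>{0..x}. \<beta> w = b}) * ?R"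
    by (simp add: algebra_simps)
  thus ?thesis by (simp only: mult_le_cancel_right_pos[OF zero_less_power] of_nat_le_iff)
qed

lemma top_bid_bound:
  assumes "v \<le> x" and "\<beta> v = c" and "c < x" and top: "\<forall>w\<le>x. \<beta> w \<le> c"
  shows "v * m * card {w\<in>{0..x}. \<beta> w = c} \<le> (m + 1) * (x + 1)"
proof -
  let ?N = "real (x + 1) ^ m" and ?R = "real (x + 1) ^ (m - 1)"
    and ?k = "real (card {w\<in>{0..x}. \<beta> w = c})"
  have below: "\<forall>j<m. \<beta> (vs j) \<le> c" if "vs \<in> profiles" for vs
    using top profile_le_x[OF that] by blast
  have "wins (c + 1) = (\<Sum>vs\<in>profiles. 1)"
    unfolding wins_def using below by (intro sum.cong refl win_eq_1_if_all_below) (auto simp: le_imp_less_Suc)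
  hence sure: "wins (c + 1) = ?N" using card_profiles by simp
  have "real m * ?k * ?R / real (m + 1)
          = (\<Sum>vs\<in>profiles. real (card {j. j < m \<and> \<beta> (vs j) = c}) / real (m + 1))"
    by (simp add: sum_divide_distrib[symmetric] sum_card_opponents_at)
  also have "\<dots> \<le> (\<Sum>vs\<in>profiles. 1 - win m (\<lambda>_. \<beta>) vs c)"
    using below by (intro sum_mono win_deficit_ge) auto
  also have "\<dots> = ?N - wins c"
    unfolding wins_def using card_profiles by (simp add: sum_subtractf)
  finally have deficit: "real m * ?k * ?R / real (m + 1) \<le> ?N - wins c" .
  have "real v * wins (c + 1) - real (c + 1) * ?N \<le> real v * wins c - real c * ?N"
    using wins_scaled_best_response[OF \<open>v \<le> x\<close>, of "c + 1"] assms by simp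
  hence "real v * (?N - wins c) \<le> ?N" using sure by (simp add: algebra_simps)
  moreover have "real v * (real m * ?k * ?R / real (m + 1)) \<le> real v * (?N - wins c)"
    by (intro mult_left_mono deficit) simp
  ultimately have "real v * (real m * ?k * ?R / real (m + 1)) \<le> real (x + 1) * ?R"
    by (subst power_eq_mult_power_pred[symmetric]) linarith
  hence "real v * (real m * ?k * ?R) \<le> real (m + 1) * (real (x + 1) * ?R)"
    by (simp add: field_simps)
  hence "real (v * m * card {w\<in>{0..x}. \<beta> w = c}) * ?R \<le> real ((m + 1) * (x + 1)) * ?R"
    by (simp add: algebra_simps)
  thus ?thesis by (simp only: mult_le_cancel_right_pos[OF zero_less_power] of_nat_le_iff)
qed

lemma top_jump_le_1:
  assumes "m \<le> 2"
  shows "\<beta> x \<le> \<beta> (x - 1) + 1"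
proof (rule ccontr)
  define b where "b = \<beta> x"
  assume "\<not> ?thesis"
  hence jump: "\<beta> (x - 1) + 2 \<le> b" by (simp add: b_def)
  have lower: "\<beta> w \<le> b - 2" if "w \<le> x" "w \<noteq> x" for w
  proof -
    from that have "\<beta> w \<le> \<beta> (x - 1)" by (intro bid_mono) auto
    with jump show ?thesis by simp
  qed
  have no_lower: "\<forall>w\<le>x. \<beta> w \<noteq> b - 1"
  proof (intro allI impI)
    fix w assume "w \<le> x"
    show "\<beta> w \<noteq> b - 1"
    proof (cases "w = x")
      case True
      with jump show ?thesis by (simp add: b_def)
    next
      case False
      with \<open>w \<le> x\<close> lower[of w] jump show ?thesis by simp
    qed
  qed
  have "{w\<in>{0..x}. \<beta> w = b} \<subseteq> {x}"
    using lower jump by fastforce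
  hence "card {w\<in>{0..x}. \<beta> w = b} \<le> card {x}"
    by (intro card_mono) simp_all
  hence "x * m * card {w\<in>{0..x}. \<beta> w = b} \<le> x * 2 * 1"
    using assms by (intro mult_le_mono) auto
  moreover have "2 * (x + 1) \<le> x * m * card {w\<in>{0..x}. \<beta> w = b}"
    using jump no_lower by (intro isolated_bid_bound) (auto simp: b_def)
  ultimately have "2 * (x + 1) \<le> x * 2 * 1" by (rule le_trans[rotated])
  thus False by simp
qed

lemma second_jump_le_1:
  assumes "m \<le> 2" and "4 \<le> x"
  shows "\<beta> (x - 1) \<le> \<beta> (x - 2) + 1"
proof (rule ccontr)
  define c where "c = \<beta> (x - 1)"
  assume "\<not> ?thesis"
  hence jump: "\<beta> (x - 2) + 2 \<le> c" by (simp add: c_def)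
  have bid_cases: "\<beta> w \<le> c - 2 \<or> w = x - 1 \<or> w = x" if "w \<le> x" for w
  proof (cases "w \<le> x - 2")
    case True
    hence "\<beta> w \<le> \<beta> (x - 2)" by (intro bid_mono) auto
    with jump have "\<beta> w \<le> c - 2" by linarith
    thus ?thesis by simp
  next
    case False
    with that show ?thesis by auto
  qed
  have "c \<le> \<beta> x" unfolding c_def by (intro bid_mono) auto
  show False
  proof (cases "m = 1 \<or> c < \<beta> x")
    case tie: True
    have no_lower: "\<forall>w\<le>x. \<beta> w \<noteq> c - 1"
    proof (intro allI impI)
      fix w assume "w \<le> x"
      with bid_cases[of w] jump \<open>c \<le> \<beta> x\<close> show "\<beta> w \<noteq> c - 1"
        by (auto simp: c_def)
    qed
    have "m * card {w\<in>{0..x}. \<beta> w = c} \<le> 2"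
    proof (cases "m = 1")
      case True
      have "{w\<in>{0..x}. \<beta> w = c} \<subseteq> {x - 1, x}"
        using bid_cases jump by fastforce
      hence "card {w\<in>{0..x}. \<beta> w = c} \<le> card {x - 1, x}" by (intro card_mono) simp_all
      also have "\<dots> \<le> 2" by (simp add: card_insert_le_m1)
      finally show ?thesis using True by simp
    next
      case False
      with tie have "{w\<in>{0..x}. \<beta> w = c} \<subseteq> {x - 1}"
        using bid_cases jump by fastforce
      hence "card {w\<in>{0..x}. \<beta> w = c} \<le> card {x - 1}" by (intro card_mono) simp_all
      hence "m * card {w\<in>{0..x}. \<beta> w = c} \<le> 2 * 1" using assms by (intro mult_le_mono) simp_all
      thus ?thesis by simp
    qed
    hence "(x - 1) * m * card {w\<in>{0..x}. \<beta> w = c} \<le> (x - 1) * 2"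
      unfolding mult.assoc by (rule mult_le_mono2)
    moreover have "2 * (x + 1) \<le> (x - 1) * m * card {w\<in>{0..x}. \<beta> w = c}"
      using jump no_lower by (intro isolated_bid_bound) (auto simp: c_def)
    ultimately have "2 * (x + 1) \<le> (x - 1) * 2" by linarith
    thus False by simp
  next
    case False
    with assms opponents \<open>c \<le> \<beta> x\<close> have "m = 2" "\<beta> x = c" by auto
    have top: "\<forall>w\<le>x. \<beta> w \<le> c"
      using bid_mono \<open>\<beta> x = c\<close> by auto
    have "c < x"
      using bid_le_value[of "x - 1"] assms unfolding c_def by simp
    have "{x - 1, x} \<subseteq> {w\<in>{0..x}. \<beta> w = c}"
      using \<open>\<beta> x = c\<close> c_def by auto
    hence "card {x - 1, x} \<le> card {w\<in>{0..x}. \<beta> w = c}" by (intro card_mono) simp_all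
    hence "x * 2 * 2 \<le> x * m * card {w\<in>{0..x}. \<beta> w = c}"
      using assms \<open>m = 2\<close> by (intro mult_le_mono) auto
    moreover have "x * m * card {w\<in>{0..x}. \<beta> w = c} \<le> (m + 1) * (x + 1)"
      using \<open>\<beta> x = c\<close> \<open>c < x\<close> top by (intro top_bid_bound) auto
    ultimately have "x * 2 * 2 \<le> (m + 1) * (x + 1)" by (rule le_trans)
    with assms \<open>m = 2\<close> show False by simp
  qed
qed

end

lemma sym_equilibrium_imp_best_response:
  assumes "sym_equilibrium x n \<beta>" and "2 \<le> n"
  shows "symmetric_best_response x (n - 1) \<beta>"
proof
  show "0 < n - 1" "strat x \<beta>" using assms by (auto simp: sym_equilibrium_def)
  fix v b assume "v \<le> x" "b \<le> x"
  let ?I = "interim x (n - 1) (\<lambda>_. \<beta>)"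
  have "strat x (\<beta>(v := b))" using \<open>strat x \<beta>\<close> \<open>b \<le> x\<close> by (simp add: strat_def)
  with assms have "payoff x (n - 1) (\<lambda>_. \<beta>) (\<beta>(v := b)) \<le> payoff x (n - 1) (\<lambda>_. \<beta>) \<beta>"
    by (simp add: sym_equilibrium_def)
  hence "(\<Sum>w\<in>{0..x}. ?I w ((\<beta>(v := b)) w)) \<le> (\<Sum>w\<in>{0..x}. ?I w (\<beta> w))"
    by (simp add: payoff_def divide_le_cancel add_pos_nonneg del: fun_upd_apply)
  moreover have "v \<in> {0..x}" using \<open>v \<le> x\<close> by simp
  ultimately show "?I v b \<le> ?I v (\<beta> v)"
    by (simp add: sum.remove[of "{0..x}" v] sum.cong[OF refl, of "{0..x} - {v}" "\<lambda>w. ?I w ((\<beta>(v := b)) w)"])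
qed

theorem mainTheorem16:
  fixes x n :: nat and \<beta> :: "nat \<Rightarrow> nat"
  assumes "n \<in> {2, 3}" and "x \<ge> 10" and "sym_equilibrium x n \<beta>"
  shows "\<beta> (x - 1) \<le> \<beta> (x - 2) + 1 \<and> \<beta> x \<le> \<beta> (x - 1) + 1"
proof -
  from assms(1) have "2 \<le> n" "n - 1 \<le> 2" by auto
  then interpret symmetric_best_response x "n - 1" \<beta>
    using assms(3) by (intro sym_equilibrium_imp_best_response)
  show ?thesis
    using second_jump_le_1 top_jump_le_1 \<open>n - 1 \<le> 2\<close> assms(2) by simp
qed

end
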